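(* Let $k=\mathbb R$ or $\mathbb C$, let $(V,g)$ be an inner product vector space over $k$, let $f\in\operatorname{End}_k(V)$, and let $\mathcal H_f=\{H_i\}_{i\in I}$ be a family of finite-dimensional $f$-invariant subspaces with $V=\bigoplus_{i\in I}H_i$; write $f_i=f|_{H_i}$ and $\widetilde{\mathcal H}_f^\perp=\bigoplus_{i\in I}[\operatorname{Ker} f_i]_i^\perp$. Then $\widetilde{\mathcal H}_f^\perp=[\operatorname{Ker} f]^\perp$ if and only if $[\operatorname{Ker} f_i]_i^\perp\subseteq\big[\sum_{j\ne i}\operatorname{Ker} f_j\big]^\perp$ for every $i\in I$.
   Context: An inner product is linear in the first argument, conjugate-symmetric and positive definite. $V=\bigoplus_{i\in I}H_i$ means the natural map $\bigoplus H_i\to V$ is an isomorphism. For a subspace $W\subseteq V$, $W^\perp=\{v\in V:g(w,v)=0\ \forall w\in W\}$; for a subspace $W\subseteq H_i$, $[W]_i^\perp=\{v\in H_i:g(w,v)=0\ \forall w\in W\}$. *)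

theory Defs
  imports Complex_Main
begin

text \<open>Inner product on a vector space with scalar multiplication scale over the
 field 'k (intended: real or complex), with conjugation cj (identity for real,
 cnj for complex): linear in the first argument, conjugate-symmetric, positive definite.\<close>
definition is_inner_product ::
  "('k::real_field \<Rightarrow> 'v::ab_group_add \<Rightarrow> 'v) \<Rightarrow> ('k \<Rightarrow> 'k) \<Rightarrow> ('v \<Rightarrow> 'v \<Rightarrow> 'k) \<Rightarrow> bool" where
  "is_inner_product scale cj g \<longleftrightarrow>
     (\<forall>a x y z. g (scale a x + y) z = a * g x z + g y z) \<and>
     (\<forall>x y. g x y = cj (g y x)) \<and>
     (\<forall>x. x \<noteq> 0 \<longrightarrow> (\<exists>r::real. r > 0 \<and> g x x = of_real r))"

definition fin_dim_subspace :: "('k::field \<Rightarrow> 'v::ab_group_add \<Rightarrow> 'v) \<Rightarrow> 'v set \<Rightarrow> bool" where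
  "fin_dim_subspace scale H \<longleftrightarrow>
     module.subspace scale H \<and> (\<exists>B. finite B \<and> B \<subseteq> H \<and> module.span scale B = H)"

text \<open>The whole space is the (internal, algebraic) direct sum of the family H over I:
 the natural map from the external direct sum is bijective.\<close>
definition is_direct_sum :: "'i set \<Rightarrow> ('i \<Rightarrow> 'v::comm_monoid_add set) \<Rightarrow> bool" where
  "is_direct_sum I H \<longleftrightarrow>
     (\<forall>v. \<exists>!x. (\<forall>i\<in>I. x i \<in> H i) \<and> (\<forall>i. i \<notin> I \<longrightarrow> x i = 0) \<and>
              finite {i. x i \<noteq> 0} \<and> v = (\<Sum>i\<in>{i. x i \<noteq> 0}. x i))"

definition fam_sum :: "'i set \<Rightarrow> ('i \<Rightarrow> 'v::comm_monoid_add set) \<Rightarrow> 'v set" where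
  "fam_sum I W = {v. \<exists>F x. finite F \<and> F \<subseteq> I \<and> (\<forall>i\<in>F. x i \<in> W i) \<and> v = sum x F}"

definition rker :: "('v \<Rightarrow> 'w::zero) \<Rightarrow> 'v set \<Rightarrow> 'v set" where
  "rker f H = {v \<in> H. f v = 0}"

text \<open>Orthogonal complement W^perp in V, and relative complement [W]_H^perp in H.\<close>
definition orth :: "('v \<Rightarrow> 'v \<Rightarrow> 'k::zero) \<Rightarrow> 'v set \<Rightarrow> 'v set" where
  "orth g W = {v. \<forall>w\<in>W. g w v = 0}"

definition orth_in :: "('v \<Rightarrow> 'v \<Rightarrow> 'k::zero) \<Rightarrow> 'v set \<Rightarrow> 'v set \<Rightarrow> 'v set" where
  "orth_in g H W = {v \<in> H. \<forall>w\<in>W. g w v = 0}"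

end

theory Submission imports Defs begin

text \<open>Because the \<open>H\<^sub>i\<close> are \<open>f\<close>-invariant and independent, \<open>Ker f\<close> is the direct sum of the
  \<open>Ker f\<^sub>i\<close>. Since \<open>[Ker f\<^sub>i]\<^sub>i\<^sup>\<perp>\<close> is orthogonal to \<open>Ker f\<^sub>i\<close> by definition, the condition on the
  right says exactly that \<open>\<Sum>\<^sub>i [Ker f\<^sub>i]\<^sub>i\<^sup>\<perp> \<subseteq> [Ker f]\<^sup>\<perp>\<close>. The reverse inclusion then comes for
  free: projecting each component of \<open>v \<in> [Ker f]\<^sup>\<perp>\<close> orthogonally onto \<open>Ker f\<^sub>i\<close> inside the
  finite-dimensional \<open>H\<^sub>i\<close> writes \<open>v = k + p\<close> with \<open>k \<in> Ker f\<close> and \<open>p \<in> \<Sum>\<^sub>i [Ker f\<^sub>i]\<^sub>i\<^sup>\<perp>\<close>,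
  so \<open>k = v - p\<close> is orthogonal to itself and hence zero.\<close>

lemma fam_sum_sumI:
  assumes "finite F" "F \<subseteq> I" "\<And>i. i \<in> F \<Longrightarrow> x i \<in> W i"
  shows "sum x F \<in> fam_sum I W"
  unfolding fam_sum_def using assms by blast

lemma fam_sum_singletonI: "i \<in> I \<Longrightarrow> x \<in> W i \<Longrightarrow> x \<in> fam_sum I W"
  using fam_sum_sumI[of "{i}" I "\<lambda>_. x" W] by simp

lemma is_direct_sum_fam_sum_UNIV:
  assumes "is_direct_sum I H"
  shows "fam_sum I H = UNIV"
proof -
  have "v \<in> fam_sum I H" for v
  proof -
    obtain x where x: "\<forall>i\<in>I. x i \<in> H i" "\<forall>i. i \<notin> I \<longrightarrow> x i = 0"
      "finite {i. x i \<noteq> 0}" "v = (\<Sum>i\<in>{i. x i \<noteq> 0}. x i)"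
      using assms unfolding is_direct_sum_def by blast
    then show ?thesis
      unfolding x(4) using x(1-3) by (intro fam_sum_sumI) auto
  qed
  then show ?thesis by blast
qed

lemma is_direct_sum_sum_eq_0D:
  assumes ds: "is_direct_sum I H" and H0: "\<forall>i\<in>I. 0 \<in> H i"
    and T: "finite T" "T \<subseteq> I" "\<forall>i\<in>T. z i \<in> H i" "sum z T = 0"
    and i: "i \<in> T"
  shows "z i = 0"
proof -
  define decomposes_0 where "decomposes_0 x \<longleftrightarrow> (\<forall>i\<in>I. x i \<in> H i) \<and>
    (\<forall>i. i \<notin> I \<longrightarrow> x i = 0) \<and> finite {i. x i \<noteq> 0} \<and> 0 = (\<Sum>i\<in>{i. x i \<noteq> 0}. x i)" for x
  define z' where "z' j = (if j \<in> T then z j else 0)" for j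
  have supp: "{j. z' j \<noteq> 0} \<subseteq> T" unfolding z'_def by auto
  have "sum z' {j. z' j \<noteq> 0} = sum z' T"
    by (rule sum.mono_neutral_left[OF T(1) supp]) auto
  also have "\<dots> = 0" using T(4) unfolding z'_def by simp
  finally have "decomposes_0 z'"
    unfolding decomposes_0_def using T H0 supp finite_subset[OF supp] by (auto simp: z'_def)
  moreover have "decomposes_0 (\<lambda>_. 0)" unfolding decomposes_0_def using H0 by auto
  moreover have "\<exists>!x. decomposes_0 x"
    using ds unfolding is_direct_sum_def decomposes_0_def by (rule spec)
  ultimately have "z' = (\<lambda>_. 0)" by blast
  then show ?thesis using i unfolding z'_def by meson
qed

lemma rker_UNIV_eq_fam_sum:
  assumes f: "additive f" and ds: "is_direct_sum I H"
    and H0: "\<forall>i\<in>I. 0 \<in> H i" and inv: "\<forall>i\<in>I. f ` H i \<subseteq> H i"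
  shows "rker f UNIV = fam_sum I (\<lambda>i. rker f (H i))"
proof
  show "rker f UNIV \<subseteq> fam_sum I (\<lambda>i. rker f (H i))"
  proof
    fix w assume w: "w \<in> rker f UNIV"
    have "w \<in> fam_sum I H" using is_direct_sum_fam_sum_UNIV[OF ds] by simp
    then obtain S y where S: "finite S" "S \<subseteq> I" "\<forall>i\<in>S. y i \<in> H i" "w = sum y S"
      unfolding fam_sum_def by blast
    have "sum (\<lambda>i. f (y i)) S = 0"
      using w additive.sum[OF f, of y S] unfolding S(4) rker_def by simp
    moreover have "\<forall>i\<in>S. f (y i) \<in> H i" using S(2,3) inv by blast
    ultimately have "\<forall>i\<in>S. f (y i) = 0"
      using is_direct_sum_sum_eq_0D[OF ds H0 S(1,2), of "\<lambda>i. f (y i)"] by blast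
    then show "w \<in> fam_sum I (\<lambda>i. rker f (H i))"
      unfolding S(4) using S(1-3) by (intro fam_sum_sumI) (auto simp: rker_def)
  qed
next
  show "fam_sum I (\<lambda>i. rker f (H i)) \<subseteq> rker f UNIV"
    unfolding fam_sum_def rker_def by (auto simp: additive.sum[OF f])
qed

locale hermitian_form = vector_space scale
  for scale :: "'k::field \<Rightarrow> 'v::ab_group_add \<Rightarrow> 'v" +
  fixes cj :: "'k \<Rightarrow> 'k" and g :: "'v \<Rightarrow> 'v \<Rightarrow> 'k"
  assumes g_linear_left: "g (scale a x + y) z = a * g x z + g y z"
    and g_conj_sym: "g x y = cj (g y x)"
    and cj_add: "cj (a + b) = cj a + cj b"
    and cj_mult: "cj (a * b) = cj a * cj b"
    and cj_cj: "cj (cj a) = a"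
begin

lemma g_additive_left: "additive (\<lambda>x. g x z)"
  by unfold_locales (use g_linear_left[of 1] in simp)

lemma g_additive_right: "additive (g z)"
  by unfold_locales (metis g_conj_sym cj_add additive.add[OF g_additive_left])

lemma g_scale_right: "g z (scale a x) = cj a * g z x"
  by (metis g_conj_sym cj_mult g_linear_left[of a x 0] additive.zero[OF g_additive_left] add_0_right)

lemmas g_zero_left = additive.zero[OF g_additive_left]
  and g_sum_left = additive.sum[OF g_additive_left]
  and g_diff_right = additive.diff[OF g_additive_right]
  and g_sum_right = additive.sum[OF g_additive_right]

lemma orth_span: "orth g (span B) = orth g B"
proof
  show "orth g (span B) \<subseteq> orth g B"
    unfolding orth_def using span_base by blast
next
  show "orth g B \<subseteq> orth g (span B)"
  proof
    fix u assume u: "u \<in> orth g B"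
    have "g w u = 0" if "w \<in> span B" for w
      using that by (induct rule: span_induct_alt) (use u in \<open>auto simp: orth_def g_linear_left g_zero_left\<close>)
    then show "u \<in> orth g (span B)" unfolding orth_def by blast
  qed
qed

lemma fam_sum_subset_orth:
  assumes "\<And>i j a b. i \<in> I \<Longrightarrow> j \<in> J \<Longrightarrow> a \<in> A i \<Longrightarrow> b \<in> B j \<Longrightarrow> g b a = 0"
  shows "fam_sum I A \<subseteq> orth g (fam_sum J B)"
  unfolding fam_sum_def orth_def
  using assms by (force simp: g_sum_left g_sum_right intro!: sum.neutral)

lemma fam_sum_orth_in_subset_orth_iff:
  "fam_sum I (\<lambda>i. orth_in g (H i) (K i)) \<subseteq> orth g (fam_sum I K) \<longleftrightarrow>
    (\<forall>i\<in>I. orth_in g (H i) (K i) \<subseteq> orth g (fam_sum (I - {i}) K))"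
proof
  assume sub: "fam_sum I (\<lambda>i. orth_in g (H i) (K i)) \<subseteq> orth g (fam_sum I K)"
  show "\<forall>i\<in>I. orth_in g (H i) (K i) \<subseteq> orth g (fam_sum (I - {i}) K)"
  proof (intro ballI subsetI)
    fix i p assume i: "i \<in> I" and p: "p \<in> orth_in g (H i) (K i)"
    have "p \<in> fam_sum I (\<lambda>i. orth_in g (H i) (K i))" using i p by (rule fam_sum_singletonI)
    moreover have "fam_sum (I - {i}) K \<subseteq> fam_sum I K" unfolding fam_sum_def by blast
    ultimately show "p \<in> orth g (fam_sum (I - {i}) K)" using sub unfolding orth_def by blast
  qed
next
  assume orth_others: "\<forall>i\<in>I. orth_in g (H i) (K i) \<subseteq> orth g (fam_sum (I - {i}) K)"
  show "fam_sum I (\<lambda>i. orth_in g (H i) (K i)) \<subseteq> orth g (fam_sum I K)"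
  proof (rule fam_sum_subset_orth)
    fix i j a b assume ij: "i \<in> I" "j \<in> I" and a: "a \<in> orth_in g (H i) (K i)" and b: "b \<in> K j"
    show "g b a = 0"
    proof (cases "j = i")
      case True
      then show ?thesis using a b unfolding orth_in_def by blast
    next
      case False
      then have "b \<in> fam_sum (I - {i}) K" using ij b by (intro fam_sum_singletonI) auto
      then show ?thesis using orth_others ij a unfolding orth_def by blast
    qed
  qed
qed

end

locale anisotropic_hermitian_form = hermitian_form +
  assumes g_anisotropic: "g x x = 0 \<Longrightarrow> x = 0"
begin

lemma orthogonal_projection_span:
  assumes "finite B"
  shows "\<exists>k\<in>span B. v - k \<in> orth g (span B)"
  using assms
proof (induct B arbitrary: v rule: finite_induct)
  case empty
  then show ?case by (auto simp: orth_def span_zero g_zero_left)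
next
  case (insert b B)
  obtain kb where kb: "kb \<in> span B" "b - kb \<in> orth g (span B)"
    using insert.hyps(3) by blast
  obtain k0 where k0: "k0 \<in> span B" "v - k0 \<in> orth g (span B)"
    using insert.hyps(3) by blast
  define u where "u = b - kb"
  show ?case
  proof (cases "u = 0")
    case True
    then have "span (insert b B) = span B" using kb u_def span_redundant by simp
    then show ?thesis using k0 by auto
  next
    case False
    \<comment> \<open>\<open>u\<close> is orthogonal to \<open>span B\<close>; correct \<open>k0\<close> along \<open>u\<close> to remove the \<open>u\<close>-component of \<open>v - k0\<close>\<close>
    define c where "c = cj (g u (v - k0) / g u u)"
    define k where "k = k0 + scale c u"
    have span_mono_insert: "span B \<subseteq> span (insert b B)" by (rule span_mono) blast
    have "u \<in> span (insert b B)"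
      unfolding u_def using kb(1) span_mono_insert by (intro span_diff) (auto intro: span_base)
    then have k: "k \<in> span (insert b B)"
      unfolding k_def using k0(1) span_mono_insert by (intro span_add span_scale) auto
    have g_v_k: "g w (v - k) = g w (v - k0) - cj c * g w u" for w
    proof -
      have "v - k = (v - k0) - scale c u" unfolding k_def by (simp add: algebra_simps)
      then show ?thesis by (simp only: g_diff_right g_scale_right)
    qed
    have orth_B: "g w (v - k) = 0" if "w \<in> span B" for w
      using g_v_k[of w] k0 kb that unfolding u_def orth_def by simp
    have "g u u \<noteq> 0" using g_anisotropic False by blast
    then have "g u (v - k) = 0" using g_v_k[of u] unfolding c_def by (simp add: cj_cj)
    then have "g b (v - k) = 0"
      using orth_B[OF kb(1)] additive.add[OF g_additive_left, of u kb] unfolding u_def by simp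
    then have "v - k \<in> orth g (insert b B)"
      using orth_B span_base unfolding orth_def by blast
    then show ?thesis using k by (auto simp: orth_span)
  qed
qed

lemma fin_dim_orth_in_decomp:
  assumes H: "fin_dim_subspace scale H" and K: "subspace K" "K \<subseteq> H" and x: "x \<in> H"
  shows "\<exists>k\<in>K. x - k \<in> orth_in g H K"
proof -
  obtain T where T: "finite T" "span T = H" "subspace H"
    using H unfolding fin_dim_subspace_def by blast
  obtain B where B: "B \<subseteq> K" "independent B" "K \<subseteq> span B"
    by (rule basis_exists)
  have "finite B" using independent_span_bound[OF T(1) B(2)] B(1) K(2) T(2) by blast
  moreover have "span B = K" using span_subspace[OF B(1) B(3) K(1)] .
  ultimately obtain k where k: "k \<in> K" "x - k \<in> orth g K"
    using orthogonal_projection_span by blast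
  moreover have "x - k \<in> H" using subspace_diff[OF T(3) x] k(1) K(2) by blast
  ultimately show ?thesis unfolding orth_def orth_in_def by blast
qed

lemma orth_subset_fam_sum_orth_in:
  assumes H: "fam_sum I H = UNIV"
    and decomp: "\<And>i x. i \<in> I \<Longrightarrow> x \<in> H i \<Longrightarrow> \<exists>k\<in>K i. x - k \<in> orth_in g (H i) (K i)"
    and orth_sum: "fam_sum I (\<lambda>i. orth_in g (H i) (K i)) \<subseteq> orth g (fam_sum I K)"
  shows "orth g (fam_sum I K) \<subseteq> fam_sum I (\<lambda>i. orth_in g (H i) (K i))"
proof
  fix v assume v: "v \<in> orth g (fam_sum I K)"
  have "v \<in> fam_sum I H" using H by simp
  then obtain S x where S: "finite S" "S \<subseteq> I" "\<forall>i\<in>S. x i \<in> H i" "v = sum x S"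
    unfolding fam_sum_def by blast
  obtain k where k: "\<forall>i\<in>S. k i \<in> K i \<and> x i - k i \<in> orth_in g (H i) (K i)"
    using bchoice[of S "\<lambda>i k. k \<in> K i \<and> x i - k \<in> orth_in g (H i) (K i)"] decomp S(2,3) by blast
  define p where "p = (\<Sum>i\<in>S. x i - k i)"
  have p: "p \<in> fam_sum I (\<lambda>i. orth_in g (H i) (K i))"
    unfolding p_def using S(1,2) k by (intro fam_sum_sumI) auto
  have kS: "sum k S \<in> fam_sum I K" using S(1,2) k by (intro fam_sum_sumI) auto
  have "sum k S = v - p" unfolding p_def S(4) by (simp add: sum_subtractf)
  moreover have "v - p \<in> orth g (fam_sum I K)"
    using v p orth_sum unfolding orth_def by (auto simp: g_diff_right)
  ultimately have "g (sum k S) (sum k S) = 0" using kS unfolding orth_def by simp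
  then have "sum k S = 0" by (rule g_anisotropic)
  then show "v \<in> fam_sum I (\<lambda>i. orth_in g (H i) (K i))"
    using p unfolding p_def S(4) by (simp add: sum_subtractf)
qed

lemma orth_rker_eq_fam_sum_iff:
  assumes f: "Vector_Spaces.linear scale scale f"
    and H: "\<forall>i\<in>I. fin_dim_subspace scale (H i) \<and> f ` H i \<subseteq> H i"
    and ds: "is_direct_sum I H"
  shows "fam_sum I (\<lambda>i. orth_in g (H i) (rker f (H i))) = orth g (rker f UNIV) \<longleftrightarrow>
    (\<forall>i\<in>I. orth_in g (H i) (rker f (H i)) \<subseteq> orth g (fam_sum (I - {i}) (\<lambda>j. rker f (H j))))"
proof -
  let ?K = "\<lambda>i. rker f (H i)" and ?P = "\<lambda>i. orth_in g (H i) (rker f (H i))"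
  have f_hom: "module_hom scale scale f" using f module_hom_iff_linear by blast
  have H_subspace: "subspace (H i)" if "i \<in> I" for i
    using H that unfolding fin_dim_subspace_def by blast
  have "additive f" by unfold_locales (rule module_hom.add[OF f_hom])
  then have ker: "rker f UNIV = fam_sum I ?K"
    using rker_UNIV_eq_fam_sum[OF _ ds] H H_subspace subspace_0 by blast
  have "orth g (fam_sum I ?K) \<subseteq> fam_sum I ?P" if "fam_sum I ?P \<subseteq> orth g (fam_sum I ?K)"
  proof (rule orth_subset_fam_sum_orth_in[OF is_direct_sum_fam_sum_UNIV[OF ds] _ that])
    fix i x assume i: "i \<in> I" and x: "x \<in> H i"
    have "?K i = H i \<inter> {x. f x = 0}" unfolding rker_def by blast
    then have "subspace (?K i)"
      using subspace_inter[OF H_subspace[OF i] module_hom.subspace_kernel[OF f_hom]] by simp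
    then show "\<exists>k\<in>?K i. x - k \<in> orth_in g (H i) (?K i)"
      using fin_dim_orth_in_decomp H i x unfolding rker_def by blast
  qed
  then have "fam_sum I ?P = orth g (rker f UNIV) \<longleftrightarrow> fam_sum I ?P \<subseteq> orth g (fam_sum I ?K)"
    unfolding ker by blast
  then show ?thesis using fam_sum_orth_in_subset_orth_iff by simp
qed

end

lemma is_inner_product_anisotropic_hermitian_form:
  assumes "vector_space scale" and g: "is_inner_product scale cj g"
    and "\<And>a b. cj (a + b) = cj a + cj b" "\<And>a b. cj (a * b) = cj a * cj b" "\<And>a. cj (cj a) = a"
  shows "anisotropic_hermitian_form scale cj g"
proof -
  have "g x x = 0 \<Longrightarrow> x = 0" for x
    using g unfolding is_inner_product_def by (metis less_irrefl of_real_eq_0_iff)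
  then show ?thesis
    using assms unfolding anisotropic_hermitian_form_def anisotropic_hermitian_form_axioms_def
      hermitian_form_def hermitian_form_axioms_def is_inner_product_def
    by blast
qed

theorem lemma3p19:
  shows "(\<forall>(scale :: real \<Rightarrow> 'v::ab_group_add \<Rightarrow> 'v) (g :: 'v \<Rightarrow> 'v \<Rightarrow> real) f (I :: 'i set) H.
            vector_space scale \<and> is_inner_product scale (\<lambda>x. x) g \<and>
            Vector_Spaces.linear scale scale f \<and>
            (\<forall>i\<in>I. fin_dim_subspace scale (H i) \<and> f ` H i \<subseteq> H i) \<and>
            is_direct_sum I H \<longrightarrow>
            (fam_sum I (\<lambda>i. orth_in g (H i) (rker f (H i))) = orth g (rker f UNIV) \<longleftrightarrow>
             (\<forall>i\<in>I. orth_in g (H i) (rker f (H i))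
                       \<subseteq> orth g (fam_sum (I - {i}) (\<lambda>j. rker f (H j))))))
       \<and>
         (\<forall>(scale :: complex \<Rightarrow> 'w::ab_group_add \<Rightarrow> 'w) (g :: 'w \<Rightarrow> 'w \<Rightarrow> complex) f (I :: 'j set) H.
            vector_space scale \<and> is_inner_product scale cnj g \<and>
            Vector_Spaces.linear scale scale f \<and>
            (\<forall>i\<in>I. fin_dim_subspace scale (H i) \<and> f ` H i \<subseteq> H i) \<and>
            is_direct_sum I H \<longrightarrow>
            (fam_sum I (\<lambda>i. orth_in g (H i) (rker f (H i))) = orth g (rker f UNIV) \<longleftrightarrow>
             (\<forall>i\<in>I. orth_in g (H i) (rker f (H i))
                       \<subseteq> orth g (fam_sum (I - {i}) (\<lambda>j. rker f (H j))))))"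
  by (intro conjI allI impI; elim conjE;
      rule anisotropic_hermitian_form.orth_rker_eq_fam_sum_iff[OF
        is_inner_product_anisotropic_hermitian_form];
      assumption?; simp)

end
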